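(* Consider the stochastic energy exchange model and the notation of the context. For every sufficiently small $\eta>0$, with $\alpha=1-\frac{1}{2(1-\eta)}$, there exist constants $C_1>0$ and $M'$ depending on $N$ and $\eta$ such that $$\mathbb{E}_{\mathbf{E}}[V(\mathbf{E}_{\tau_1^+})]\le V(\mathbf{E})-\frac{C_1}{\mathcal{R}}V^{\alpha}(\mathbf{E})$$ for all $\mathbf{E}\in\mathbb{R}^N_+$ with $V(\mathbf{E})>M'$.
   Context: Fix $N\ge1$, $T_L,T_R>0$, a sufficiently large $K$ ($K\gg T_L,T_R$) and $R(a,b)=\min\{K,\sqrt{\min(a,b)}\}$. Write $E_0:=T_L$, $E_{N+1}:=T_R$. The stochastic energy exchange model is the Markov jump process $\mathbf{E}_t=(E_1(t),\dots,E_N(t))$ on $\mathbb{R}^N_+$ with independent exponential clocks $i=1,\dots,N+1$, clock $i$ having rate $R_i=R(E_{i-1},E_i)$. When clock $i$ with $2\le i\le N$ rings, $(E_{i-1},E_i)\mapsto(p(E_{i-1}+E_i),(1-p)(E_{i-1}+E_i))$, $p$ uniform on $(0,1)$; when clock $1$ (resp. $N+1$) rings, $E_1\mapsto p(E_1+X_L)$ (resp. $E_N\mapsto p(E_N+X_R)$), $X_L,X_R$ exponential with means $T_L,T_R$; all randomness independent. Let $\tau_1$ be the time of the first clock ring, $\mathbf{E}_{\tau_1^+}$ the configuration immediately after it, $\mathcal{R}=\sum_{i=1}^{N+1}R_i$, and $\mathbb{E}_{\mathbf{E}}$ expectation with $\mathbf{E}_0=\mathbf{E}$. Let $a_m=1-\frac{2^{m-1}-1}{2^N-1}$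 and $V(\mathbf{E})=\sum_{m=1}^N\sum_{k=1}^{N-m+1}\big(\sum_{j=0}^{m-1}E_{k+j}\big)^{a_m\eta-1}$. *)

theory Defs
  imports "HOL-Analysis.Analysis"
begin

text \<open>Configurations are functions nat => real; only the entries 1..N matter.\<close>

definition extE :: "nat \<Rightarrow> real \<Rightarrow> real \<Rightarrow> (nat \<Rightarrow> real) \<Rightarrow> nat \<Rightarrow> real" where
  "extE N TL TR E i = (if i = 0 then TL else if i = N + 1 then TR else E i)"

definition rateR :: "real \<Rightarrow> real \<Rightarrow> real \<Rightarrow> real" where
  "rateR K a b = min K (sqrt (min a b))"

definition clockRate :: "nat \<Rightarrow> real \<Rightarrow> real \<Rightarrow> real \<Rightarrow> (nat \<Rightarrow> real) \<Rightarrow> nat \<Rightarrow> real" where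
  "clockRate N TL TR K E i = rateR K (extE N TL TR E (i - 1)) (extE N TL TR E i)"

definition totRate :: "nat \<Rightarrow> real \<Rightarrow> real \<Rightarrow> real \<Rightarrow> (nat \<Rightarrow> real) \<Rightarrow> real" where
  "totRate N TL TR K E = (\<Sum>i = 1..N + 1. clockRate N TL TR K E i)"

definition aexp :: "nat \<Rightarrow> nat \<Rightarrow> real" where
  "aexp N m = 1 - (2 ^ (m - 1) - 1) / (2 ^ N - 1)"

definition Vfun :: "nat \<Rightarrow> real \<Rightarrow> (nat \<Rightarrow> real) \<Rightarrow> real" where
  "Vfun N \<eta> E = (\<Sum>m = 1..N. \<Sum>k = 1..N - m + 1.
      (\<Sum>j = 0..m - 1. E (k + j)) powr (aexp N m * \<eta> - 1))"

text \<open>Interior exchange at clock i (2 <= i <= N) with splitting fraction p.\<close>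
definition innerJump :: "nat \<Rightarrow> real \<Rightarrow> (nat \<Rightarrow> real) \<Rightarrow> nat \<Rightarrow> real" where
  "innerJump i p E = E(i - 1 := p * (E (i - 1) + E i), i := (1 - p) * (E (i - 1) + E i))"

definition bdJump :: "nat \<Rightarrow> real \<Rightarrow> real \<Rightarrow> (nat \<Rightarrow> real) \<Rightarrow> nat \<Rightarrow> real" where
  "bdJump j p x E = E(j := p * (E j + x))"

definition bdExp :: "nat \<Rightarrow> real \<Rightarrow> real \<Rightarrow> nat \<Rightarrow> (nat \<Rightarrow> real) \<Rightarrow> ennreal" where
  "bdExp N \<eta> T j E = (\<integral>\<^sup>+ p. \<integral>\<^sup>+ x. indicator {0<..<1} p * indicator {0<..} x
        * ennreal (exp (- x / T) / T) * ennreal (Vfun N \<eta> (bdJump j p x E)) \<partial>lborel \<partial>lborel)"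

definition innerExp :: "nat \<Rightarrow> real \<Rightarrow> nat \<Rightarrow> (nat \<Rightarrow> real) \<Rightarrow> ennreal" where
  "innerExp N \<eta> i E = (\<integral>\<^sup>+ p. indicator {0<..<1} p * ennreal (Vfun N \<eta> (innerJump i p E)) \<partial>lborel)"

definition jumpExp :: "nat \<Rightarrow> real \<Rightarrow> real \<Rightarrow> real \<Rightarrow> nat \<Rightarrow> (nat \<Rightarrow> real) \<Rightarrow> ennreal" where
  "jumpExp N TL TR \<eta> i E =
     (if i = 1 then bdExp N \<eta> TL 1 E
      else if i = N + 1 then bdExp N \<eta> TR N E
      else innerExp N \<eta> i E)"

text \<open>E_E[V(E_{tau_1^+})]: clock i rings first with probability R_i / R (as ennreal, may be infinite).\<close>
definition expVafter :: "nat \<Rightarrow> real \<Rightarrow> real \<Rightarrow> real \<Rightarrow> real \<Rightarrow> (nat \<Rightarrow> real) \<Rightarrow> ennreal" where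
  "expVafter N TL TR K \<eta> E =
     (\<Sum>i = 1..N + 1. ennreal (clockRate N TL TR K E i / totRate N TL TR K E) * jumpExp N TL TR \<eta> i E)"

definition alphaE :: "real \<Rightarrow> real" where
  "alphaE \<eta> = 1 - 1 / (2 * (1 - \<eta>))"

end

theory Submission
  imports Defs "HOL-Probability.Distributions"
begin

text \<open>\<^const>\<open>Vfun\<close> is a sum over all windows of consecutive sites of a negative power of the window
  energy; let \<open>t\<close> be its largest term, attained at a window \<open>I\<close>, so that \<open>V \<le> N\<^sup>2 t\<close>.
  A clock ring changes only the windows containing exactly one updated site.  Such a window keeps
  the fraction \<open>p\<close> or \<open>1 - p\<close> of the energy of the window one site longer (or of the reservoir
  energy), so after averaging over \<open>p\<close> and the reservoir energy its new term is at most a constant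
  times the term of the longer window, and its old term can be dropped.  The clock at the left end
  of \<open>I\<close> changes \<open>I\<close>; since every site has energy at least \<open>t powr (-1 / (1 - \<eta>))\<close>, it rings at
  rate at least \<open>t powr (\<alpha> - 1)\<close> and so removes \<open>t\<close> at rate at least \<open>t powr \<alpha>\<close>.  Every other
  clock has rate at most \<open>K\<close>, or at most the square root of the energy of the longer window it
  feeds; by the choice of the exponents \<^const>\<open>aexp\<close>, its rate times the terms it adds is then at
  most a constant times \<open>t powr (\<alpha> - \<gamma>)\<close> with \<open>\<gamma> > 0\<close>.  For \<open>V\<close>, hence \<open>t\<close>, large the loss wins.\<close>

section \<open>Integral estimates\<close>

lemma nn_integral_unit_interval_powr:
  fixes \<beta> :: real
  assumes "0 < \<beta>" "\<beta> < 1"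
  shows "(\<integral>\<^sup>+p. indicator {0<..<1} p * ennreal (p powr -\<beta>) \<partial>lborel) \<le> ennreal (1 / (1 - \<beta>))"
proof -
  have "((\<lambda>p. p powr -\<beta>) has_integral (1 powr (-\<beta> + 1) / (-\<beta> + 1))) {0..1}"
    by (rule has_integral_powr_from_0) (use assms in auto)
  then have "(\<integral>\<^sup>+p. ennreal (indicator {0..1} p * p powr -\<beta>) \<partial>lborel) = ennreal (1 / (1 - \<beta>))"
    by (subst nn_integral_has_integral_lebesgue) auto
  moreover have "(\<integral>\<^sup>+p. indicator {0<..<1} p * ennreal (p powr -\<beta>) \<partial>lborel)
      \<le> (\<integral>\<^sup>+p. ennreal (indicator {0..1} p * p powr -\<beta>) \<partial>lborel)"
    by (intro nn_integral_mono) (auto simp: indicator_def)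
  ultimately show ?thesis by simp
qed

lemma nn_integral_unit_interval_powr_reflect:
  fixes \<beta> :: real
  assumes "0 < \<beta>" "\<beta> < 1"
  shows "(\<integral>\<^sup>+p. indicator {0<..<1} p * ennreal ((1 - p) powr -\<beta>) \<partial>lborel) \<le> ennreal (1 / (1 - \<beta>))"
proof -
  let ?f = "\<lambda>p::real. indicator {0<..<1} p * ennreal (p powr -\<beta>)"
  have "?f \<in> borel_measurable borel"
    by measurable
  then have "(\<integral>\<^sup>+p. ?f p \<partial>lborel) = (\<integral>\<^sup>+p. ?f (1 + (-1) * p) \<partial>lborel)"
    using nn_integral_real_affine[of ?f "-1" 1] by simp
  also have "(\<lambda>p. ?f (1 + (-1) * p)) = (\<lambda>p. indicator {0<..<1} p * ennreal ((1 - p) powr -\<beta>))"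
    by (auto simp: indicator_def fun_eq_iff)
  finally show ?thesis
    using nn_integral_unit_interval_powr[OF assms] by simp
qed

lemma nn_integral_unit_interval_powr_sym:
  fixes \<beta> :: real
  assumes "0 < \<beta>" "\<beta> < 1"
  shows "(\<integral>\<^sup>+p. indicator {0<..<1} p * ennreal (p powr -\<beta> + (1 - p) powr -\<beta>) \<partial>lborel)
    \<le> ennreal (2 / (1 - \<beta>))"
proof -
  have "(\<integral>\<^sup>+p. indicator {0<..<1} p * ennreal (p powr -\<beta> + (1 - p) powr -\<beta>) \<partial>lborel)
      = (\<integral>\<^sup>+p. indicator {0<..<1} p * ennreal (p powr -\<beta>) \<partial>lborel)
        + (\<integral>\<^sup>+p. indicator {0<..<1} p * ennreal ((1 - p) powr -\<beta>) \<partial>lborel)"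
    by (subst nn_integral_add[symmetric]) (auto simp: ennreal_plus distrib_left)
  also have "\<dots> \<le> ennreal (1 / (1 - \<beta>)) + ennreal (1 / (1 - \<beta>))"
    by (intro add_mono nn_integral_unit_interval_powr nn_integral_unit_interval_powr_reflect assms)
  also have "\<dots> = ennreal (2 / (1 - \<beta>))"
    using assms by (simp flip: ennreal_plus)
  finally show ?thesis .
qed

lemma nn_integral_exponential_density_le_1:
  fixes T :: real
  assumes "0 < T"
  shows "(\<integral>\<^sup>+x. indicator {0<..} x * ennreal (exp (- x / T) / T) \<partial>lborel) \<le> 1"
proof -
  have "(\<integral>\<^sup>+x. indicator {0<..} x * ennreal (exp (- x / T) / T) \<partial>lborel)
      \<le> (\<integral>\<^sup>+x. ennreal (erlang_density 0 (1 / T) x * x ^ 0) \<partial>lborel)"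
    by (intro nn_integral_mono) (auto simp: indicator_def erlang_density_def mult.commute)
  also have "\<dots> = 1"
    using nn_integral_erlang_ith_moment[of "1 / T" 0 0] assms by simp
  finally show ?thesis .
qed

lemma nn_integral_exponential_density_truncated_powr:
  fixes T \<beta> :: real
  assumes "0 < T" "0 < \<beta>" "\<beta> < 1"
  shows "(\<integral>\<^sup>+x. indicator {0<..} x * ennreal (exp (- x / T) / T)
      * ennreal (if x < 1 then x powr -\<beta> else 1) \<partial>lborel) \<le> ennreal (1 / (T * (1 - \<beta>)) + 1)"
proof -
  have "(\<integral>\<^sup>+x. indicator {0<..} x * ennreal (exp (- x / T) / T)
      * ennreal (if x < 1 then x powr -\<beta> else 1) \<partial>lborel)
    \<le> (\<integral>\<^sup>+x. ennreal (1 / T) * (indicator {0<..<1} x * ennreal (x powr -\<beta>))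
      + indicator {0<..} x * ennreal (exp (- x / T) / T) \<partial>lborel)"
  proof (intro nn_integral_mono)
    fix x :: real
    have "exp (- x / T) / T \<le> 1 / T" if "0 < x"
      using assms that by (simp add: divide_right_mono)
    then have "ennreal (exp (- x / T) / T) * ennreal (x powr -\<beta>) \<le> ennreal (1 / T) * ennreal (x powr -\<beta>)"
      if "0 < x" using that by (intro mult_right_mono ennreal_leI) auto
    then show "indicator {0<..} x * ennreal (exp (- x / T) / T) * ennreal (if x < 1 then x powr -\<beta> else 1)
      \<le> ennreal (1 / T) * (indicator {0<..<1} x * ennreal (x powr -\<beta>))
        + indicator {0<..} x * ennreal (exp (- x / T) / T)"
      by (auto simp: indicator_def add_increasing2)
  qed
  also have "\<dots> = ennreal (1 / T) * (\<integral>\<^sup>+x. indicator {0<..<1} x * ennreal (x powr -\<beta>) \<partial>lborel)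
      + (\<integral>\<^sup>+x. indicator {0<..} x * ennreal (exp (- x / T) / T) \<partial>lborel)"
    by (subst nn_integral_add; measurable) (subst nn_integral_cmult; measurable)
  also have "\<dots> \<le> ennreal (1 / T) * ennreal (1 / (1 - \<beta>)) + 1"
    by (intro add_mono mult_left_mono nn_integral_unit_interval_powr
        nn_integral_exponential_density_le_1) (use assms in auto)
  also have "\<dots> = ennreal (1 / (T * (1 - \<beta>)) + 1)"
    using assms by (simp add: ennreal_mult[symmetric])
  finally show ?thesis .
qed

lemma nn_integral_affine_le:
  fixes g :: "real \<Rightarrow> ennreal" and f :: "real \<Rightarrow> real"
  assumes "g \<in> borel_measurable borel" "f \<in> borel_measurable borel"
    and "(\<integral>\<^sup>+x. g x \<partial>lborel) \<le> 1" "(\<integral>\<^sup>+x. g x * ennreal (f x) \<partial>lborel) \<le> ennreal A"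
    and "0 \<le> W" "0 \<le> c" "0 \<le> A"
  shows "(\<integral>\<^sup>+x. g x * ennreal (W + c * f x) \<partial>lborel) \<le> ennreal (W + c * A)"
proof -
  have "(\<integral>\<^sup>+x. g x * ennreal (W + c * f x) \<partial>lborel)
      \<le> (\<integral>\<^sup>+x. ennreal W * g x + ennreal c * (g x * ennreal (f x)) \<partial>lborel)"
  proof (intro nn_integral_mono)
    fix x
    have "ennreal (W + c * f x) \<le> ennreal W + ennreal c * ennreal (f x)"
    proof (cases "0 \<le> f x")
      case True
      then show ?thesis using assms(5,6) by (simp add: ennreal_mult)
    next
      case False
      then have "ennreal (W + c * f x) \<le> ennreal W"
        using assms(6) by (intro ennreal_leI) (simp add: mult_nonneg_nonpos)
      then show ?thesis by (simp add: add_increasing2)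
    qed
    then have "g x * ennreal (W + c * f x) \<le> g x * (ennreal W + ennreal c * ennreal (f x))"
      by (rule mult_left_mono) simp
    then show "g x * ennreal (W + c * f x) \<le> ennreal W * g x + ennreal c * (g x * ennreal (f x))"
      by (simp add: algebra_simps)
  qed
  also have "\<dots> = ennreal W * (\<integral>\<^sup>+x. g x \<partial>lborel) + ennreal c * (\<integral>\<^sup>+x. g x * ennreal (f x) \<partial>lborel)"
    using assms(1,2) by (simp add: nn_integral_add nn_integral_cmult)
  also have "\<dots> \<le> ennreal W * 1 + ennreal c * ennreal A"
    using assms(3,4) by (intro add_mono mult_left_mono) auto
  also have "\<dots> = ennreal (W + c * A)"
    using assms(5-7) by (simp add: ennreal_mult)
  finally show ?thesis .
qed

section \<open>Windows\<close>

text \<open>The pair \<open>(m, k)\<close> encodes the window of \<open>m\<close> consecutive sites starting at site \<open>k\<close>.\<close>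

definition window :: "nat \<times> nat \<Rightarrow> nat set" where
  "window J = {snd J..<snd J + fst J}"

definition windows :: "nat \<Rightarrow> (nat \<times> nat) set" where
  "windows N = {(m, k). 1 \<le> m \<and> 1 \<le> k \<and> k + m \<le> N + 1}"

definition window_term :: "nat \<Rightarrow> real \<Rightarrow> (nat \<Rightarrow> real) \<Rightarrow> nat \<times> nat \<Rightarrow> real" where
  "window_term N \<eta> x J = sum x (window J) powr (aexp N (fst J) * \<eta> - 1)"

lemma mem_windows [simp]: "(m, k) \<in> windows N \<longleftrightarrow> 1 \<le> m \<and> 1 \<le> k \<and> k + m \<le> N + 1"
  by (simp add: windows_def)

lemma windows_subset_square: "windows N \<subseteq> {1..N} \<times> {1..N}"
  by auto

lemma finite_windows [simp]: "finite (windows N)"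
  using windows_subset_square by (rule finite_subset) simp

lemma card_windows_le: "card (windows N) \<le> N * N"
  using card_mono[OF _ windows_subset_square] by (simp add: card_cartesian_product)

lemma sum_windows_bounded_above:
  fixes f :: "nat \<times> nat \<Rightarrow> real"
  assumes "A \<subseteq> windows N" "\<And>J. J \<in> A \<Longrightarrow> f J \<le> c" "0 \<le> c"
  shows "sum f A \<le> real (N * N) * c"
proof -
  have "sum f A \<le> card A * c"
    using assms(2) by (rule sum_bounded_above)
  also have "card A \<le> N * N"
    using card_mono[OF finite_windows assms(1)] card_windows_le[of N] by linarith
  then have "card A * c \<le> N * N * c"
    using assms(3) by (intro mult_right_mono) (auto simp flip: of_nat_mult)
  finally show ?thesis .
qed

lemma window_subset_sites: "J \<in> windows N \<Longrightarrow> window J \<subseteq> {1..N}"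
  by (cases J) (auto simp: window_def)

lemma sum_window_pos:
  fixes x :: "nat \<Rightarrow> real"
  assumes "\<forall>j\<in>{1..N}. 0 < x j" "J \<in> windows N"
  shows "0 < sum x (window J)"
proof (rule sum_pos)
  show "window J \<noteq> {}"
    using assms(2) by (cases J) (auto simp: window_def)
  show "\<And>j. j \<in> window J \<Longrightarrow> 0 < x j"
    using assms window_subset_sites[OF assms(2)] by blast
qed (simp add: window_def)

lemma Vfun_eq_sum_window_term: "Vfun N \<eta> x = (\<Sum>J\<in>windows N. window_term N \<eta> x J)"
proof -
  have "(\<Sum>j = 0..m - 1. x (k + j)) = sum x (window (m, k))" if "1 \<le> m" for m k
  proof -
    have "(\<Sum>j = 0..m - 1. x (k + j)) = (\<Sum>j = 0..<m. x (j + k))"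
      using that by (intro sum.cong) (auto simp: add.commute)
    also have "\<dots> = sum x {0 + k..<m + k}"
      by (rule sum.shift_bounds_nat_ivl[symmetric])
    finally show ?thesis
      by (simp add: window_def add.commute)
  qed
  then have "Vfun N \<eta> x = (\<Sum>m = 1..N. \<Sum>k = 1..N - m + 1. window_term N \<eta> x (m, k))"
    unfolding Vfun_def window_term_def by (intro sum.cong refl) auto
  also have "\<dots> = (\<Sum>(m, k)\<in>Sigma {1..N} (\<lambda>m. {1..N - m + 1}). window_term N \<eta> x (m, k))"
    by (rule sum.Sigma) auto
  also have "Sigma {1..N} (\<lambda>m. {1..N - m + 1}) = windows N"
    by auto
  finally show ?thesis
    by (simp add: case_prod_beta')
qed

lemma window_term_nonneg: "0 \<le> window_term N \<eta> x J"
  by (simp add: window_term_def)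

lemma Vfun_nonneg: "0 \<le> Vfun N \<eta> x"
  unfolding Vfun_eq_sum_window_term by (intro sum_nonneg window_term_nonneg)

lemma ex_max_window_term:
  assumes "1 \<le> N"
  obtains I where "I \<in> windows N" "\<forall>J\<in>windows N. window_term N \<eta> x J \<le> window_term N \<eta> x I"
proof -
  let ?S = "window_term N \<eta> x ` windows N"
  have "(1, 1) \<in> windows N"
    using assms by simp
  then have "?S \<noteq> {}"
    by blast
  then have "Max ?S \<in> ?S"
    by (simp add: Max_in)
  then obtain I where "I \<in> windows N" "window_term N \<eta> x I = Max ?S"
    by auto
  then show ?thesis
    using that by (simp add: Max_ge)
qed

lemma window_term_le_Vfun: "J \<in> windows N \<Longrightarrow> window_term N \<eta> x J \<le> Vfun N \<eta> x"
  unfolding Vfun_eq_sum_window_term by (rule member_le_sum) (auto simp: window_term_nonneg)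

lemma sum_window_term_le_Vfun: "D \<subseteq> windows N \<Longrightarrow> sum (window_term N \<eta> x) D \<le> Vfun N \<eta> x"
  unfolding Vfun_eq_sum_window_term
  by (rule sum_mono2) (auto simp: window_term_nonneg)

lemma aexp_bounds:
  assumes "1 \<le> m" "m \<le> N"
  shows "1/2 \<le> aexp N m" "aexp N m \<le> 1"
proof -
  define a b :: real where "a = 2 ^ (m - 1)" and "b = 2 ^ N"
  have "2 * a = 2 ^ m"
    using assms(1) by (cases m) (auto simp: a_def)
  with assms have "2 * a \<le> b" "2 \<le> 2 * a"
    using power_increasing[of m N "2::real"] power_increasing[of 1 m "2::real"] by (auto simp: b_def)
  then have "0 \<le> (a - 1) / (b - 1)" "(a - 1) / (b - 1) \<le> 1/2"
    by (simp_all add: pos_divide_le_eq)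
  then show "1/2 \<le> aexp N m" "aexp N m \<le> 1"
    unfolding aexp_def a_def b_def by linarith+
qed

lemma window_exponent_bounds:
  assumes "J \<in> windows N" "0 < \<eta>" "\<eta> < 1"
  shows "-(1 - \<eta>/2) \<le> aexp N (fst J) * \<eta> - 1" "aexp N (fst J) * \<eta> - 1 < 0"
proof -
  have "1 \<le> fst J" "fst J \<le> N"
    using assms(1) by (cases J; simp)+
  then have "1/2 \<le> aexp N (fst J)" "aexp N (fst J) \<le> 1"
    by (rule aexp_bounds)+
  then have "1/2 * \<eta> \<le> aexp N (fst J) * \<eta>" "aexp N (fst J) * \<eta> \<le> 1 * \<eta>"
    using assms(2) by (simp_all add: mult_right_mono)
  then show "-(1 - \<eta>/2) \<le> aexp N (fst J) * \<eta> - 1" "aexp N (fst J) * \<eta> - 1 < 0"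
    using assms(3) by auto
qed

lemma powr_le_of_scaled_le:
  fixes q L S e \<beta> :: real
  assumes "0 < q" "q \<le> 1" "0 < L" "q * L \<le> S" "-\<beta> \<le> e" "e \<le> 0"
  shows "S powr e \<le> q powr -\<beta> * L powr e"
proof -
  have "S powr e \<le> (q * L) powr e"
    using assms by (intro powr_mono2') auto
  also have "\<dots> = q powr e * L powr e"
    using assms by (simp add: powr_mult)
  also have "\<dots> \<le> q powr -\<beta> * L powr e"
    using assms by (intro mult_right_mono powr_mono') auto
  finally show ?thesis .
qed

lemma sum_replaced_terms_le:
  fixes t t' a :: "'a \<Rightarrow> real"
  assumes "finite S" "D \<subseteq> A" "A \<subseteq> S"
    and "\<And>J. J \<in> S - A \<Longrightarrow> t' J \<le> t J" "\<And>J. J \<in> A \<Longrightarrow> t' J \<le> a J" "\<And>J. J \<in> A \<Longrightarrow> 0 \<le> t J"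
  shows "sum t' S \<le> sum t S - sum t D + sum a A"
proof -
  have fin: "finite A"
    using assms(3,1) by (rule finite_subset)
  have "sum t' S = sum t' (S - A) + sum t' A"
    using assms(3,1) by (rule sum.subset_diff)
  also have "\<dots> \<le> sum t (S - A) + sum a A"
    using assms(4,5) by (intro add_mono sum_mono) auto
  finally have "sum t' S \<le> sum t (S - A) + sum a A" .
  moreover have "sum t S = sum t (S - A) + sum t (A - D) + sum t D"
    using sum.subset_diff[OF assms(3,1), of t] sum.subset_diff[OF assms(2) fin, of t] by simp
  moreover have "0 \<le> sum t (A - D)"
    using assms(6) by (intro sum_nonneg) auto
  ultimately show ?thesis
    by linarith
qed

section \<open>Effect of a single exchange\<close>

lemma sum_innerJump:
  assumes "1 \<le> i" "finite A"
  shows "sum (innerJump i p x) A = sum x A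
     + (if i - 1 \<in> A then p * (x (i - 1) + x i) - x (i - 1) else 0)
     + (if i \<in> A then (1 - p) * (x (i - 1) + x i) - x i else 0)"
proof -
  have "innerJump i p x = (\<lambda>j. x j
      + (if j = i - 1 then p * (x (i - 1) + x i) - x (i - 1) else 0)
      + (if j = i then (1 - p) * (x (i - 1) + x i) - x i else 0))"
    using assms(1) by (auto simp: innerJump_def fun_eq_iff)
  then show ?thesis
    using assms(2) by (simp add: sum.distrib sum.delta)
qed

lemma sum_bdJump:
  assumes "finite A"
  shows "sum (bdJump j p X x) A = sum x A + (if j \<in> A then p * (x j + X) - x j else 0)"
proof -
  have "bdJump j p X x = (\<lambda>i. x i + (if i = j then p * (x j + X) - x j else 0))"
    by (auto simp: bdJump_def fun_eq_iff)
  then show ?thesis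
    using assms by (simp add: sum.distrib sum.delta)
qed

definition crosses_bond :: "nat \<Rightarrow> nat \<times> nat \<Rightarrow> bool" where
  "crosses_bond i J \<longleftrightarrow> (i - 1 \<in> window J) \<noteq> (i \<in> window J)"

definition widen_across :: "nat \<Rightarrow> nat \<times> nat \<Rightarrow> nat \<times> nat" where
  "widen_across i J = (if i \<in> window J then (fst J + 1, snd J - 1) else (fst J + 1, snd J))"

lemma sum_innerJump_window_not_crossing:
  "1 \<le> i \<Longrightarrow> \<not> crosses_bond i J \<Longrightarrow> sum (innerJump i p x) (window J) = sum x (window J)"
  by (auto simp: sum_innerJump window_def crosses_bond_def algebra_simps)

lemma widen_across_window:
  assumes "J \<in> windows N" "crosses_bond i J" "2 \<le> i" "i \<le> N"
  shows "widen_across i J \<in> windows N" "fst (widen_across i J) = fst J + 1"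
    "window (widen_across i J) = insert (i - 1) (insert i (window J))"
proof -
  obtain m k where J: "J = (m, k)"
    by (cases J)
  obtain i' where i: "i = Suc i'"
    using assms(3) by (cases i) auto
  show "fst (widen_across i J) = fst J + 1"
    by (simp add: widen_across_def)
  have "widen_across i J \<in> windows N \<and> window (widen_across i J) = insert (i - 1) (insert i (window J))"
  proof (cases "i \<in> window J")
    case True
    then have "k = i"
      using assms(2) by (auto simp: J i crosses_bond_def window_def)
    then show ?thesis
      using True assms by (auto simp: J i widen_across_def window_def)
  next
    case False
    then have "k + m = i"
      using assms(2) by (auto simp: J i crosses_bond_def window_def)
    then show ?thesis
      using False assms by (auto simp: J i widen_across_def window_def)
  qed
  then show "widen_across i J \<in> windows N" "window (widen_across i J) = insert (i - 1) (insert i (window J))"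
    by blast+
qed

lemma sum_innerJump_one_side:
  assumes "1 \<le> i" "finite A" "(i - 1 \<in> A) \<noteq> (i \<in> A)"
  shows "\<exists>q\<in>{p, 1 - p}. sum (innerJump i p x) A = q * (x (i - 1) + x i) + sum x (A - {i - 1, i})"
proof (cases "i \<in> A")
  case True
  then have "i - 1 \<notin> A" "A - {i - 1, i} = A - {i}"
    using assms(3) by auto
  then have "sum x A = x i + sum x (A - {i - 1, i})"
    using sum.remove[OF assms(2) True, of x] by simp
  then show ?thesis
    using True \<open>i - 1 \<notin> A\<close> assms(1,2) by (simp add: sum_innerJump)
next
  case False
  then have "i - 1 \<in> A" "A - {i - 1, i} = A - {i - 1}"
    using assms(3) by auto
  then have "sum x A = x (i - 1) + sum x (A - {i - 1, i})"
    using sum.remove[OF assms(2) \<open>i - 1 \<in> A\<close>, of x] by simp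
  then show ?thesis
    using False \<open>i - 1 \<in> A\<close> assms(1,2) by (simp add: sum_innerJump)
qed

lemma sum_innerJump_window_crossing:
  fixes x :: "nat \<Rightarrow> real"
  assumes "1 \<le> i" "crosses_bond i J" "0 \<le> p" "p \<le> 1"
    and nonneg: "\<forall>j\<in>insert (i - 1) (insert i (window J)). 0 \<le> x j"
  shows "min p (1 - p) * sum x (insert (i - 1) (insert i (window J))) \<le> sum (innerJump i p x) (window J)"
proof -
  define W where "W = window J"
  define rest where "rest = sum x (W - {i - 1, i})"
  have fin: "finite W"
    by (simp add: W_def window_def)
  have rest: "0 \<le> rest"
    using nonneg by (auto simp: rest_def W_def intro: sum_nonneg)
  have pair: "0 \<le> x (i - 1) + x i"
    using nonneg by simp
  have "insert (i - 1) (insert i W) = insert (i - 1) (insert i (W - {i - 1, i}))"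
    by auto
  then have wide: "sum x (insert (i - 1) (insert i W)) = x (i - 1) + x i + rest"
    using assms(1) fin by (simp add: rest_def)
  obtain q where q: "q \<in> {p, 1 - p}" and jump: "sum (innerJump i p x) W = q * (x (i - 1) + x i) + rest"
    using sum_innerJump_one_side[OF assms(1) fin] assms(2) by (auto simp: W_def rest_def crosses_bond_def)
  have "min p (1 - p) \<le> q" "min p (1 - p) \<le> 1" "0 \<le> min p (1 - p)"
    using q assms(3,4) by auto
  then have "min p (1 - p) * (x (i - 1) + x i) \<le> q * (x (i - 1) + x i)" "min p (1 - p) * rest \<le> rest"
    using pair rest by (auto intro: mult_right_mono mult_left_le_one_le)
  then show ?thesis
    unfolding W_def[symmetric] wide jump distrib_left[of "min p (1 - p)" "x (i - 1) + x i" rest]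
    by linarith
qed

lemma sum_bdJump_outside: "j \<notin> A \<Longrightarrow> sum (bdJump j p X x) A = sum x A"
  by (auto simp: bdJump_def intro: sum.cong)

lemma sum_bdJump_inside:
  fixes x :: "nat \<Rightarrow> real"
  assumes "finite A" "j \<in> A" "\<forall>i\<in>A. 0 \<le> x i" "0 \<le> p"
  shows "p * X \<le> sum (bdJump j p X x) A"
proof -
  have "x j \<le> sum x A" "0 \<le> p * x j"
    using assms by (auto intro: member_le_sum)
  moreover have "sum (bdJump j p X x) A = p * X + (sum x A - x j) + p * x j"
    using assms by (simp add: sum_bdJump algebra_simps)
  ultimately show ?thesis
    by linarith
qed

definition crossing_sum :: "nat \<Rightarrow> real \<Rightarrow> (nat \<Rightarrow> real) \<Rightarrow> nat \<Rightarrow> real" where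
  "crossing_sum N \<eta> x i = (\<Sum>J | J \<in> windows N \<and> crosses_bond i J.
     sum x (window (widen_across i J)) powr (aexp N (fst J) * \<eta> - 1))"

lemma crossing_sum_nonneg: "0 \<le> crossing_sum N \<eta> x i"
  by (simp add: crossing_sum_def sum_nonneg)

lemma window_term_innerJump_le:
  fixes x :: "nat \<Rightarrow> real"
  assumes pos: "\<forall>j\<in>{1..N}. 0 < x j" and i: "2 \<le> i" "i \<le> N" and p: "0 < p" "p < 1"
    and \<eta>: "0 < \<eta>" "\<eta> < 1" and J: "J \<in> windows N" "crosses_bond i J"
  shows "window_term N \<eta> (innerJump i p x) J
    \<le> (p powr -(1 - \<eta>/2) + (1 - p) powr -(1 - \<eta>/2))
      * sum x (window (widen_across i J)) powr (aexp N (fst J) * \<eta> - 1)"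
proof -
  let ?W = "window (widen_across i J)" and ?q = "min p (1 - p)"
  have W: "widen_across i J \<in> windows N" "?W = insert (i - 1) (insert i (window J))"
    using widen_across_window[OF J i] by auto
  have "\<forall>j\<in>?W. 0 \<le> x j"
    using pos window_subset_sites[OF W(1)] by fastforce
  then have "?q * sum x ?W \<le> sum (innerJump i p x) (window J)"
    using sum_innerJump_window_crossing[of i J p x] i J p by (simp add: W(2))
  then have "window_term N \<eta> (innerJump i p x) J \<le> ?q powr -(1 - \<eta>/2) * sum x ?W powr (aexp N (fst J) * \<eta> - 1)"
    unfolding window_term_def using p sum_window_pos[OF pos W(1)] window_exponent_bounds[OF J(1) \<eta>]
    by (intro powr_le_of_scaled_le) auto
  also have "?q powr -(1 - \<eta>/2) \<le> p powr -(1 - \<eta>/2) + (1 - p) powr -(1 - \<eta>/2)"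
    by (simp add: min_def)
  finally show ?thesis
    by (simp add: mult_right_mono)
qed

lemma window_term_bdJump_le:
  fixes x :: "nat \<Rightarrow> real"
  assumes pos: "\<forall>j\<in>{1..N}. 0 < x j" and J: "J \<in> windows N" "j \<in> window J"
    and p: "0 < p" "p < 1" and X: "0 < X" and \<eta>: "0 < \<eta>" "\<eta> < 1"
  shows "window_term N \<eta> (bdJump j p X x) J
    \<le> p powr -(1 - \<eta>/2) * (if X < 1 then X powr -(1 - \<eta>/2) else 1)"
proof -
  let ?e = "aexp N (fst J) * \<eta> - 1"
  note e = window_exponent_bounds[OF J(1) \<eta>]
  have "\<forall>i\<in>window J. 0 \<le> x i"
    using pos window_subset_sites[OF J(1)] by fastforce
  then have "p * X \<le> sum (bdJump j p X x) (window J)"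
    using J p by (intro sum_bdJump_inside) (auto simp: window_def)
  then have "window_term N \<eta> (bdJump j p X x) J \<le> p powr -(1 - \<eta>/2) * X powr ?e"
    unfolding window_term_def using p X e by (intro powr_le_of_scaled_le) auto
  also have "X powr ?e \<le> (if X < 1 then X powr -(1 - \<eta>/2) else 1)"
    using X e by (auto simp: powr_mono' intro: order.trans[OF powr_mono[of ?e 0]])
  finally show ?thesis
    by (simp add: mult_left_mono)
qed

lemma Vfun_innerJump_le:
  fixes x :: "nat \<Rightarrow> real"
  assumes pos: "\<forall>j\<in>{1..N}. 0 < x j" and i: "2 \<le> i" "i \<le> N" and p: "0 < p" "p < 1"
    and \<eta>: "0 < \<eta>" "\<eta> < 1" and D: "D \<subseteq> {J \<in> windows N. crosses_bond i J}"
  shows "Vfun N \<eta> (innerJump i p x) \<le> Vfun N \<eta> x - sum (window_term N \<eta> x) D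
    + (p powr -(1 - \<eta>/2) + (1 - p) powr -(1 - \<eta>/2)) * crossing_sum N \<eta> x i"
  unfolding Vfun_eq_sum_window_term crossing_sum_def sum_distrib_left
proof (rule sum_replaced_terms_le)
  show "window_term N \<eta> (innerJump i p x) J \<le> window_term N \<eta> x J"
    if "J \<in> windows N - {J \<in> windows N. crosses_bond i J}" for J
    using that i by (simp add: window_term_def sum_innerJump_window_not_crossing)
qed (use D window_term_innerJump_le[OF pos i p \<eta>] in \<open>auto simp: window_term_nonneg\<close>)

lemma Vfun_bdJump_le:
  fixes x :: "nat \<Rightarrow> real"
  assumes pos: "\<forall>j\<in>{1..N}. 0 < x j" and p: "0 < p" "p < 1" and X: "0 < X"
    and \<eta>: "0 < \<eta>" "\<eta> < 1" and D: "D \<subseteq> {J \<in> windows N. j \<in> window J}"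
  shows "Vfun N \<eta> (bdJump j p X x) \<le> Vfun N \<eta> x - sum (window_term N \<eta> x) D
    + N * N * (p powr -(1 - \<eta>/2) * (if X < 1 then X powr -(1 - \<eta>/2) else 1))"
proof -
  define a where "a = p powr -(1 - \<eta>/2) * (if X < 1 then X powr -(1 - \<eta>/2) else 1)"
  let ?A = "{J \<in> windows N. j \<in> window J}"
  have "Vfun N \<eta> (bdJump j p X x) \<le> Vfun N \<eta> x - sum (window_term N \<eta> x) D + (\<Sum>J\<in>?A. a)"
    unfolding Vfun_eq_sum_window_term
  proof (rule sum_replaced_terms_le)
    show "window_term N \<eta> (bdJump j p X x) J \<le> window_term N \<eta> x J" if "J \<in> windows N - ?A" for J
      using that by (simp add: window_term_def sum_bdJump_outside)
  qed (use D window_term_bdJump_le[OF pos _ _ p X \<eta>] in \<open>auto simp: window_term_nonneg a_def\<close>)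
  also have "(\<Sum>J\<in>?A. a) \<le> N * N * a"
    by (rule sum_windows_bounded_above) (auto simp: a_def)
  finally show ?thesis
    by (simp add: a_def)
qed

lemma innerExp_le:
  fixes x :: "nat \<Rightarrow> real"
  assumes pos: "\<forall>j\<in>{1..N}. 0 < x j" and i: "2 \<le> i" "i \<le> N"
    and \<eta>: "0 < \<eta>" "\<eta> < 1" and D: "D \<subseteq> {J \<in> windows N. crosses_bond i J}"
  shows "innerExp N \<eta> i x \<le> ennreal (Vfun N \<eta> x - sum (window_term N \<eta> x) D + 4 / \<eta> * crossing_sum N \<eta> x i)"
proof -
  define W where "W = Vfun N \<eta> x - sum (window_term N \<eta> x) D"
  define \<beta> where "\<beta> = 1 - \<eta>/2"
  have W: "0 \<le> W"
    using D sum_window_term_le_Vfun[of D N \<eta> x] by (auto simp: W_def)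
  have "innerExp N \<eta> i x \<le> (\<integral>\<^sup>+p. indicator {0<..<1} p
      * ennreal (W + crossing_sum N \<eta> x i * (p powr -\<beta> + (1 - p) powr -\<beta>)) \<partial>lborel)"
    unfolding innerExp_def
  proof (intro nn_integral_mono)
    fix p :: real
    show "indicator {0<..<1} p * ennreal (Vfun N \<eta> (innerJump i p x))
      \<le> indicator {0<..<1} p * ennreal (W + crossing_sum N \<eta> x i * (p powr -\<beta> + (1 - p) powr -\<beta>))"
      using Vfun_innerJump_le[OF pos i _ _ \<eta> D, of p]
      by (cases "p \<in> {0<..<1}") (auto simp: W_def \<beta>_def algebra_simps intro!: ennreal_leI)
  qed
  also have "\<dots> \<le> ennreal (W + crossing_sum N \<eta> x i * (2 / (1 - \<beta>)))"
  proof (rule nn_integral_affine_le)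
    show "(\<integral>\<^sup>+p. indicator {0<..<1::real} p \<partial>lborel) \<le> 1"
      by (subst nn_integral_indicator) auto
    show "(\<integral>\<^sup>+p. indicator {0<..<1} p * ennreal (p powr -\<beta> + (1 - p) powr -\<beta>) \<partial>lborel) \<le> ennreal (2 / (1 - \<beta>))"
      using \<eta> by (intro nn_integral_unit_interval_powr_sym) (auto simp: \<beta>_def)
  qed (use W \<eta> crossing_sum_nonneg in \<open>auto simp: \<beta>_def\<close>)
  also have "W + crossing_sum N \<eta> x i * (2 / (1 - \<beta>)) = W + 4 / \<eta> * crossing_sum N \<eta> x i"
    by (simp add: \<beta>_def)
  finally show ?thesis
    by (simp add: W_def)
qed

text \<open>From integrating \<open>p powr -\<beta>\<close> and the truncated \<open>X powr -\<beta>\<close>, \<open>\<beta> = 1 - \<eta>/2\<close>, against the laws of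
  the splitting fraction and of the reservoir energy.\<close>
definition bath_excess :: "nat \<Rightarrow> real \<Rightarrow> real \<Rightarrow> real" where
  "bath_excess N \<eta> T = N * N * (2 / (T * \<eta>) + 1) * (2 / \<eta>)"

lemma nn_integral_reservoir_Vfun_bdJump_le:
  fixes x :: "nat \<Rightarrow> real"
  assumes pos: "\<forall>j\<in>{1..N}. 0 < x j" and T: "0 < T" and p: "0 < p" "p < 1"
    and \<eta>: "0 < \<eta>" "\<eta> < 1" and D: "D \<subseteq> {J \<in> windows N. j \<in> window J}"
  shows "(\<integral>\<^sup>+X. indicator {0<..} X * ennreal (exp (- X / T) / T) * ennreal (Vfun N \<eta> (bdJump j p X x)) \<partial>lborel)
    \<le> ennreal (Vfun N \<eta> x - sum (window_term N \<eta> x) D + N * N * (2 / (T * \<eta>) + 1) * p powr -(1 - \<eta>/2))"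
proof -
  define W where "W = Vfun N \<eta> x - sum (window_term N \<eta> x) D"
  define \<beta> where "\<beta> = 1 - \<eta>/2"
  define c where "c = N * N * p powr -\<beta>"
  have W: "0 \<le> W"
    using D sum_window_term_le_Vfun[of D N \<eta> x] by (auto simp: W_def)
  have "(\<integral>\<^sup>+X. indicator {0<..} X * ennreal (exp (- X / T) / T) * ennreal (Vfun N \<eta> (bdJump j p X x)) \<partial>lborel)
    \<le> (\<integral>\<^sup>+X. indicator {0<..} X * ennreal (exp (- X / T) / T)
      * ennreal (W + c * (if X < 1 then X powr -\<beta> else 1)) \<partial>lborel)"
  proof (intro nn_integral_mono)
    fix X :: real
    show "indicator {0<..} X * ennreal (exp (- X / T) / T) * ennreal (Vfun N \<eta> (bdJump j p X x))
      \<le> indicator {0<..} X * ennreal (exp (- X / T) / T) * ennreal (W + c * (if X < 1 then X powr -\<beta> else 1))"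
      using Vfun_bdJump_le[OF pos p _ \<eta> D, of X]
      by (cases "0 < X") (auto simp: W_def c_def \<beta>_def mult.assoc intro!: mult_left_mono ennreal_leI)
  qed
  also have "\<dots> \<le> ennreal (W + c * (1 / (T * (1 - \<beta>)) + 1))"
  proof (rule nn_integral_affine_le)
    show "(\<integral>\<^sup>+X. indicator {0<..} X * ennreal (exp (- X / T) / T) \<partial>lborel) \<le> 1"
      using T by (rule nn_integral_exponential_density_le_1)
    show "(\<integral>\<^sup>+X. indicator {0<..} X * ennreal (exp (- X / T) / T)
        * ennreal (if X < 1 then X powr -\<beta> else 1) \<partial>lborel) \<le> ennreal (1 / (T * (1 - \<beta>)) + 1)"
      using \<eta> by (intro nn_integral_exponential_density_truncated_powr T) (auto simp: \<beta>_def)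
  qed (use W T \<eta> in \<open>auto simp: c_def \<beta>_def\<close>)
  also have "W + c * (1 / (T * (1 - \<beta>)) + 1) = W + N * N * (2 / (T * \<eta>) + 1) * p powr -(1 - \<eta>/2)"
    by (simp add: c_def \<beta>_def)
  finally show ?thesis
    by (simp add: W_def)
qed

lemma bdExp_le:
  fixes x :: "nat \<Rightarrow> real"
  assumes pos: "\<forall>j\<in>{1..N}. 0 < x j" and T: "0 < T"
    and \<eta>: "0 < \<eta>" "\<eta> < 1" and D: "D \<subseteq> {J \<in> windows N. j \<in> window J}"
  shows "bdExp N \<eta> T j x \<le> ennreal (Vfun N \<eta> x - sum (window_term N \<eta> x) D + bath_excess N \<eta> T)"
proof -
  define W where "W = Vfun N \<eta> x - sum (window_term N \<eta> x) D"
  define c where "c = N * N * (2 / (T * \<eta>) + 1)"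
  have W: "0 \<le> W"
    using D sum_window_term_le_Vfun[of D N \<eta> x] by (auto simp: W_def)
  have "bdExp N \<eta> T j x \<le> (\<integral>\<^sup>+p. indicator {0<..<1} p * ennreal (W + c * p powr -(1 - \<eta>/2)) \<partial>lborel)"
    unfolding bdExp_def
  proof (intro nn_integral_mono)
    fix p :: real
    show "(\<integral>\<^sup>+X. indicator {0<..<1} p * indicator {0<..} X * ennreal (exp (- X / T) / T)
        * ennreal (Vfun N \<eta> (bdJump j p X x)) \<partial>lborel)
      \<le> indicator {0<..<1} p * ennreal (W + c * p powr -(1 - \<eta>/2))"
      using nn_integral_reservoir_Vfun_bdJump_le[OF pos T _ _ \<eta> D, of p]
      by (cases "p \<in> {0<..<1}") (auto simp: W_def c_def)
  qed
  also have "\<dots> \<le> ennreal (W + c * (1 / (1 - (1 - \<eta>/2))))"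
  proof (rule nn_integral_affine_le)
    show "(\<integral>\<^sup>+p. indicator {0<..<1} p * ennreal (p powr -(1 - \<eta>/2)) \<partial>lborel) \<le> ennreal (1 / (1 - (1 - \<eta>/2)))"
      using \<eta> by (intro nn_integral_unit_interval_powr) auto
  qed (use W T \<eta> in \<open>auto simp: c_def\<close>)
  also have "W + c * (1 / (1 - (1 - \<eta>/2))) = W + bath_excess N \<eta> T"
    by (simp add: bath_excess_def c_def)
  finally show ?thesis
    by (simp add: W_def)
qed

section \<open>Exponents and clock rates\<close>

lemma aexp_Suc: "1 \<le> m \<Longrightarrow> aexp N (Suc m) = 2 * aexp N m - 1 - 1 / (2 ^ N - 1)"
  by (cases m) (auto simp: aexp_def diff_divide_distrib)

definition eta_max :: "nat \<Rightarrow> real" where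
  "eta_max N = 1 / (8 * (2 ^ N - 1))"

definition alpha_gap :: "nat \<Rightarrow> real \<Rightarrow> real" where
  "alpha_gap N \<eta> = \<eta> * eta_max N"

lemma eta_max_le: "1 \<le> N \<Longrightarrow> eta_max N \<le> 1/8"
  using power_increasing[of 1 N "2::real"] by (simp add: eta_max_def field_simps)

lemma exponent_ratio_core:
  fixes a u \<eta> :: real
  assumes "0 < \<eta>" "\<eta> < u/8" "0 < u" "u \<le> 1/3" "1/2 \<le> a" "a \<le> 1" "0 \<le> 2 * a - 1 - u"
  shows "(1 - 1 / (2 * (1 - \<eta>)) - \<eta> * u/8) * ((2 * a - 1 - u) * \<eta> - 1) \<le> a * \<eta> - 1/2"
proof -
  define b where "b = 1 - (2 * a - 1 - u) * \<eta>"
  have \<eta>1: "\<eta> < 1"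
    using assms by simp
  have "(2 * a - 1 - u) * \<eta> \<le> 1 * \<eta>"
    using assms \<eta>1 by (intro mult_right_mono) auto
  moreover have "0 \<le> (2 * a - 1 - u) * \<eta>"
    using assms by simp
  ultimately have b: "0 < b" "b \<le> 1"
    using \<eta>1 by (auto simp: b_def)
  have "(1 - \<eta>) * b \<le> 1 * 1"
    using b \<eta>1 assms(1) by (intro mult_mono) auto
  then have "(1 - \<eta>) * u * b \<le> u"
    using mult_left_mono[of "(1 - \<eta>) * b" 1 u] assms(3) by (simp add: ac_simps)
  moreover have "(1 - a) * \<eta> \<le> \<eta> / 2" "u * \<eta> \<le> u / 24"
    using assms mult_left_mono[of \<eta> "1/24" u] mult_right_mono[of "1 - a" "1/2" \<eta>] by auto
  ultimately have "0 < u - 2 * ((1 - a) * \<eta>) - 2 * (u * \<eta>) - (1 - \<eta>) * u * b / 4"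
    using assms by linarith
  then have "0 < \<eta> * (u - 2 * (1 - a) * \<eta> - 2 * u * \<eta> - (1 - \<eta>) * u * b / 4)"
    using assms(1) by (simp add: ac_simps)
  also have "\<eta> * (u - 2 * (1 - a) * \<eta> - 2 * u * \<eta> - (1 - \<eta>) * u * b / 4)
      = 2 * (1 - \<eta>) * ((1 - 1 / (2 * (1 - \<eta>)) - \<eta> * u/8) * b - (1/2 - a * \<eta>))"
    using \<eta>1 by (simp add: b_def field_simps)
  finally have "0 < (1 - 1 / (2 * (1 - \<eta>)) - \<eta> * u/8) * b - (1/2 - a * \<eta>)"
    using \<eta>1 by (simp add: zero_less_mult_iff)
  then show ?thesis
    by (simp add: b_def algebra_simps)
qed

text \<open>The ratio is the exponent in \<open>R * L powr e\<^sub>m \<le> t powr ((1/2 + e\<^sub>m) / e\<^sub>m\<^sub>+\<^sub>1)\<close>, where \<open>e\<^sub>m\<close> is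
  the exponent of windows of length \<open>m\<close>, \<open>L\<close> the energy of a window of length \<open>m + 1\<close> with term
  \<open>L powr e\<^sub>m\<^sub>+\<^sub>1 \<le> t\<close>, and \<open>R \<le> sqrt L\<close> a clock rate inside it.  The recursion \<open>aexp_Suc\<close> of the
  exponents keeps this exponent a fixed gap below \<^const>\<open>alphaE\<close>.\<close>
lemma window_exponent_ratio:
  assumes m: "1 \<le> m" "m + 1 \<le> N" and \<eta>: "0 < \<eta>" "\<eta> < eta_max N"
  shows "0 \<le> (1/2 + (aexp N m * \<eta> - 1)) / (aexp N (m + 1) * \<eta> - 1)"
    and "(1/2 + (aexp N m * \<eta> - 1)) / (aexp N (m + 1) * \<eta> - 1) \<le> alphaE \<eta> - alpha_gap N \<eta>"
proof -
  define u :: real where "u = 1 / (2 ^ N - 1)"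
  have "(2::real) ^ 2 \<le> 2 ^ N"
    using m by (intro power_increasing) auto
  then have u: "0 < u" "u \<le> 1/3"
    by (auto simp: u_def field_simps)
  have a: "1/2 \<le> aexp N m" "aexp N m \<le> 1" "1/2 \<le> aexp N (m + 1)" "aexp N (m + 1) \<le> 1"
    using aexp_bounds[of m N] aexp_bounds[of "m + 1" N] m by auto
  have a_Suc: "aexp N (m + 1) = 2 * aexp N m - 1 - u"
    using aexp_Suc[OF m(1)] by (simp add: u_def)
  have "eta_max N = u/8"
    by (simp add: eta_max_def u_def)
  then have \<eta>u: "\<eta> < u/8" "alpha_gap N \<eta> = \<eta> * u/8"
    using \<eta> by (simp_all add: alpha_gap_def)
  have "aexp N (m + 1) * \<eta> \<le> 1 * \<eta>" "aexp N m * \<eta> \<le> 1 * \<eta>"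
    using a \<eta>(1) by (intro mult_right_mono; simp)+
  then have den: "aexp N (m + 1) * \<eta> - 1 < 0" and num: "1/2 + (aexp N m * \<eta> - 1) \<le> 0"
    using \<eta>u u by auto
  then show "0 \<le> (1/2 + (aexp N m * \<eta> - 1)) / (aexp N (m + 1) * \<eta> - 1)"
    by (simp add: divide_nonpos_neg)
  have "0 \<le> 2 * aexp N m - 1 - u"
    using a a_Suc by linarith
  then have "(alphaE \<eta> - alpha_gap N \<eta>) * ((2 * aexp N m - 1 - u) * \<eta> - 1) \<le> aexp N m * \<eta> - 1/2"
    unfolding alphaE_def \<eta>u(2) using exponent_ratio_core \<eta>(1) \<eta>u(1) u a(1,2) by blast
  then have "(alphaE \<eta> - alpha_gap N \<eta>) * (aexp N (m + 1) * \<eta> - 1) \<le> 1/2 + (aexp N m * \<eta> - 1)"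
    unfolding a_Suc by linarith
  then show "(1/2 + (aexp N m * \<eta> - 1)) / (aexp N (m + 1) * \<eta> - 1) \<le> alphaE \<eta> - alpha_gap N \<eta>"
    using den by (simp add: divide_le_eq)
qed

lemma sqrt_mult_powr_le:
  fixes L t R e e' s :: real
  assumes "0 < L" "1 \<le> t" "L powr e' \<le> t" "e' < 0" "0 \<le> (1/2 + e) / e'" "(1/2 + e) / e' \<le> s"
    and "0 \<le> R" "R \<le> sqrt L"
  shows "R * L powr e \<le> t powr s"
proof -
  have "R * L powr e \<le> L powr (1/2) * L powr e"
    using assms by (intro mult_right_mono) (auto simp: powr_half_sqrt)
  also have "\<dots> = (L powr e') powr ((1/2 + e) / e')"
    using assms by (simp add: powr_powr flip: powr_add)
  also have "\<dots> \<le> t powr ((1/2 + e) / e')"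
    using assms by (intro powr_mono2) auto
  also have "\<dots> \<le> t powr s"
    using assms by (intro powr_mono) auto
  finally show ?thesis .
qed

lemma extE_interior: "1 \<le> j \<Longrightarrow> j \<le> N \<Longrightarrow> extE N TL TR x j = x j"
  by (simp add: extE_def)

lemma clockRate_interior:
  "2 \<le> i \<Longrightarrow> i \<le> N \<Longrightarrow> clockRate N TL TR K x i = rateR K (x (i - 1)) (x i)"
  by (simp add: clockRate_def extE_interior)

lemma clockRate_le_K: "clockRate N TL TR K x i \<le> K"
  by (simp add: clockRate_def rateR_def)

lemma clockRate_nonneg:
  fixes x :: "nat \<Rightarrow> real"
  assumes "\<forall>j\<in>{1..N}. 0 < x j" "0 < TL" "0 < TR" "0 \<le> K" "i \<le> N + 1"
  shows "0 \<le> clockRate N TL TR K x i"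
proof -
  have "0 \<le> extE N TL TR x j" if "j \<le> N + 1" for j
    using assms that by (auto simp: extE_def less_imp_le)
  then show ?thesis
    using assms by (simp add: clockRate_def rateR_def)
qed

lemma sqrt_le_clockRate:
  assumes "s \<le> extE N TL TR x (i - 1)" "s \<le> extE N TL TR x i" "sqrt s \<le> K"
  shows "sqrt s \<le> clockRate N TL TR K x i"
  using assms by (simp add: clockRate_def rateR_def)

lemma clockRate_interior_bounds:
  fixes x :: "nat \<Rightarrow> real"
  assumes pos: "\<forall>j\<in>{1..N}. 0 < x j" and i: "2 \<le> i" "i \<le> N" and K: "0 \<le> K"
  shows "0 \<le> clockRate N TL TR K x i" "clockRate N TL TR K x i \<le> sqrt (x i)"
proof -
  have "i - 1 \<in> {1..N}" "i \<in> {1..N}"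
    using i by auto
  then have "0 < x (i - 1)" "0 < x i"
    using pos by blast+
  then show "0 \<le> clockRate N TL TR K x i" "clockRate N TL TR K x i \<le> sqrt (x i)"
    using K by (auto simp: clockRate_interior[OF i] rateR_def intro!: min.coboundedI2)
qed

lemma clockRate_mult_widened_term_le:
  fixes x :: "nat \<Rightarrow> real"
  assumes pos: "\<forall>j\<in>{1..N}. 0 < x j" and i: "2 \<le> i" "i \<le> N" and K: "0 \<le> K"
    and \<eta>: "0 < \<eta>" "\<eta> < eta_max N"
    and t: "1 \<le> t" "\<forall>J\<in>windows N. window_term N \<eta> x J \<le> t"
    and J: "J \<in> windows N" "crosses_bond i J"
  shows "clockRate N TL TR K x i * sum x (window (widen_across i J)) powr (aexp N (fst J) * \<eta> - 1)
    \<le> t powr (alphaE \<eta> - alpha_gap N \<eta>)"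
proof -
  let ?W = "widen_across i J"
  define L where "L = sum x (window ?W)"
  note R = clockRate_interior_bounds[OF pos i K, of TL TR]
  have W: "?W \<in> windows N" "fst ?W = fst J + 1" "i \<in> window ?W"
    using widen_across_window[OF J i] by auto
  have "1 \<le> fst J" "fst J + 1 \<le> N"
    using J W(1,2) by (cases J; cases ?W; auto)+
  note ratio = window_exponent_ratio[OF this \<eta>]
  have "\<eta> < 1"
    using \<eta> eta_max_le[of N] i by simp
  have "\<forall>j\<in>window ?W. 0 \<le> x j"
    using pos window_subset_sites[OF W(1)] by fastforce
  then have L: "0 < L" "x i \<le> L"
    using sum_window_pos[OF pos W(1)] W(3) by (auto simp: L_def window_def intro!: member_le_sum)
  have "L powr (aexp N (fst J + 1) * \<eta> - 1) \<le> t"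
    using t(2) W by (auto simp: L_def window_term_def)
  moreover have "aexp N (fst J + 1) * \<eta> - 1 < 0"
    using window_exponent_bounds(2)[OF W(1) \<eta>(1) \<open>\<eta> < 1\<close>] W(2) by simp
  moreover have "clockRate N TL TR K x i \<le> sqrt L"
    using R L real_sqrt_le_mono[of "x i" L] by linarith
  ultimately show ?thesis
    unfolding L_def using L R t(1) ratio by (intro sqrt_mult_powr_le) (auto simp: L_def)
qed

lemma clockRate_mult_crossing_sum_le:
  fixes x :: "nat \<Rightarrow> real"
  assumes pos: "\<forall>j\<in>{1..N}. 0 < x j" and i: "2 \<le> i" "i \<le> N" and K: "0 \<le> K"
    and \<eta>: "0 < \<eta>" "\<eta> < eta_max N"
    and t: "1 \<le> t" "\<forall>J\<in>windows N. window_term N \<eta> x J \<le> t"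
  shows "clockRate N TL TR K x i * crossing_sum N \<eta> x i \<le> N * N * t powr (alphaE \<eta> - alpha_gap N \<eta>)"
proof -
  have "(\<Sum>J | J \<in> windows N \<and> crosses_bond i J. clockRate N TL TR K x i
      * sum x (window (widen_across i J)) powr (aexp N (fst J) * \<eta> - 1))
    \<le> real (N * N) * t powr (alphaE \<eta> - alpha_gap N \<eta>)"
    by (rule sum_windows_bounded_above) (use clockRate_mult_widened_term_le[OF pos i K \<eta> t] in auto)
  then show ?thesis
    by (simp add: crossing_sum_def sum_distrib_left)
qed

lemma alphaE_bounds: "0 < \<eta> \<Longrightarrow> \<eta> < 1/2 \<Longrightarrow> 0 < alphaE \<eta> \<and> alphaE \<eta> \<le> 1"
  by (simp add: alphaE_def field_simps)

lemma powr_inverse_exponent_le: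
  fixes y t e :: real
  assumes "0 < y" "e < 0" "y powr e \<le> t"
  shows "t powr (1 / e) \<le> y"
proof -
  have "t powr (1 / e) \<le> (y powr e) powr (1 / e)"
    using assms by (intro powr_mono2') auto
  also have "\<dots> = y"
    using assms by (simp add: powr_powr)
  finally show ?thesis .
qed

lemma site_ge_of_window_terms_le:
  fixes x :: "nat \<Rightarrow> real"
  assumes pos: "\<forall>j\<in>{1..N}. 0 < x j" and \<eta>: "0 < \<eta>" "\<eta> < 1"
    and t: "\<forall>J\<in>windows N. window_term N \<eta> x J \<le> t" and j: "j \<in> {1..N}"
  shows "t powr (-1 / (1 - \<eta>)) \<le> x j"
proof -
  have "(1, j) \<in> windows N"
    using j by auto
  then have "window_term N \<eta> x (1, j) \<le> t"
    using t by blast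
  then have "x j powr (\<eta> - 1) \<le> t"
    by (simp add: window_term_def window_def aexp_def)
  then have "t powr (1 / (\<eta> - 1)) \<le> x j"
    using pos j \<eta> by (intro powr_inverse_exponent_le) auto
  then show ?thesis
    by (simp add: minus_divide_right)
qed

lemma clockRate_lower_bound:
  fixes x :: "nat \<Rightarrow> real"
  assumes pos: "\<forall>j\<in>{1..N}. 0 < x j" and T: "0 < TL" "0 < TR" and K: "1 \<le> K"
    and \<eta>: "0 < \<eta>" "\<eta> < 1"
    and t: "1 \<le> t" "1 / TL \<le> t" "1 / TR \<le> t" "\<forall>J\<in>windows N. window_term N \<eta> x J \<le> t"
    and i: "1 \<le> i" "i \<le> N + 1"
  shows "0 < clockRate N TL TR K x i" "t powr alphaE \<eta> \<le> clockRate N TL TR K x i * t"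
proof -
  define s where "s = t powr (-1 / (1 - \<eta>))"
  have "s \<le> t powr -1"
    unfolding s_def using t(1) \<eta> by (intro powr_mono) (auto simp: field_simps)
  then have s: "0 < s" "s \<le> 1 / t"
    using t(1) by (auto simp: s_def powr_minus_divide)
  moreover have "1 / t \<le> TL" "1 / t \<le> TR" "1 / t \<le> 1"
    using t T by (auto simp: field_simps)
  ultimately have "s \<le> extE N TL TR x j" if "j \<le> N + 1" for j
    using site_ge_of_window_terms_le[OF pos \<eta> t(4), of j] that by (auto simp: extE_def s_def)
  moreover have "sqrt s \<le> K"
    using s \<open>1 / t \<le> 1\<close> K real_sqrt_le_1_iff[of s] by linarith
  ultimately have "sqrt s \<le> clockRate N TL TR K x i"
    using i by (intro sqrt_le_clockRate) auto
  then show "0 < clockRate N TL TR K x i"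
    using s(1) by (meson less_le_trans real_sqrt_gt_zero)
  have "t powr alphaE \<eta> = sqrt s * t"
  proof -
    have "sqrt s * t = t powr (-1 / (1 - \<eta>) * (1/2)) * t powr 1"
      using s t(1) by (simp add: s_def powr_half_sqrt[symmetric] powr_powr)
    also have "\<dots> = t powr (-1 / (1 - \<eta>) * (1/2) + 1)"
      by (rule powr_add[symmetric])
    also have "-1 / (1 - \<eta>) * (1/2) + 1 = alphaE \<eta>"
      using \<eta> by (simp add: alphaE_def field_simps)
    finally show ?thesis ..
  qed
  then show "t powr alphaE \<eta> \<le> clockRate N TL TR K x i * t"
    using \<open>sqrt s \<le> clockRate N TL TR K x i\<close> t(1) by (simp add: mult_right_mono)
qed

section \<open>Drift at the maximal window\<close>

definition jump_excess :: "nat \<Rightarrow> real \<Rightarrow> real \<Rightarrow> real \<Rightarrow> (nat \<Rightarrow> real) \<Rightarrow> nat \<Rightarrow> real" where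
  "jump_excess N TL TR \<eta> x i =
     (if i = 1 then bath_excess N \<eta> TL
      else if i = N + 1 then bath_excess N \<eta> TR
      else 4 / \<eta> * crossing_sum N \<eta> x i)"

lemma bath_excess_nonneg: "0 < T \<Longrightarrow> 0 < \<eta> \<Longrightarrow> 0 \<le> bath_excess N \<eta> T"
  by (simp add: bath_excess_def)

lemma jump_excess_nonneg: "0 < TL \<Longrightarrow> 0 < TR \<Longrightarrow> 0 < \<eta> \<Longrightarrow> 0 \<le> jump_excess N TL TR \<eta> x i"
  by (simp add: jump_excess_def bath_excess_nonneg crossing_sum_nonneg)

text \<open>Clock \<open>snd I\<close>, at the left end of \<open>I\<close>, always changes the energy of \<open>I\<close>, so the term of \<open>I\<close>
  is among the replaced ones.\<close>
lemma jumpExp_le: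
  fixes x :: "nat \<Rightarrow> real"
  assumes pos: "\<forall>j\<in>{1..N}. 0 < x j" and T: "0 < TL" "0 < TR" and \<eta>: "0 < \<eta>" "\<eta> < 1"
    and I: "I \<in> windows N" and i: "i \<in> {1..N + 1}"
  shows "jumpExp N TL TR \<eta> i x
    \<le> ennreal (Vfun N \<eta> x - (if i = snd I then window_term N \<eta> x I else 0) + jump_excess N TL TR \<eta> x i)"
proof -
  define D where "D = (if i = snd I then {I} else {})"
  have sum_D: "sum (window_term N \<eta> x) D = (if i = snd I then window_term N \<eta> x I else 0)"
    by (simp add: D_def)
  have start: "snd I \<in> window I" "snd I - 1 \<notin> window I" "snd I \<noteq> N + 1"
    using I by (cases I; auto simp: window_def)+
  consider "i = 1" | "i = N + 1" "i \<noteq> 1" | "2 \<le> i" "i \<le> N"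
    using i by fastforce
  then show ?thesis
  proof cases
    case 1
    then have "D \<subseteq> {J \<in> windows N. 1 \<in> window J}"
      using I start by (auto simp: D_def)
    from bdExp_le[OF pos T(1) \<eta> this] show ?thesis
      using 1 by (simp add: jumpExp_def jump_excess_def sum_D)
  next
    case 2
    then have "D \<subseteq> {J \<in> windows N. N \<in> window J}"
      using start by (auto simp: D_def)
    from bdExp_le[OF pos T(2) \<eta> this] show ?thesis
      using 2 by (simp add: jumpExp_def jump_excess_def sum_D)
  next
    case 3
    then have "D \<subseteq> {J \<in> windows N. crosses_bond i J}"
      using I start by (auto simp: D_def crosses_bond_def)
    from innerExp_le[OF pos 3 \<eta> this] show ?thesis
      using 3 by (simp add: jumpExp_def jump_excess_def sum_D)
  qed
qed

definition excess_bound :: "nat \<Rightarrow> real \<Rightarrow> real \<Rightarrow> real \<Rightarrow> real \<Rightarrow> real \<Rightarrow> real" where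
  "excess_bound N TL TR K \<eta> t = K * (bath_excess N \<eta> TL + bath_excess N \<eta> TR)
     + 4 / \<eta> * (N * N) * t powr (alphaE \<eta> - alpha_gap N \<eta>)"

lemma clockRate_mult_jump_excess_le:
  fixes x :: "nat \<Rightarrow> real"
  assumes pos: "\<forall>j\<in>{1..N}. 0 < x j" and T: "0 < TL" "0 < TR" and K: "0 \<le> K"
    and \<eta>: "0 < \<eta>" "\<eta> < eta_max N"
    and t: "1 \<le> t" "\<forall>J\<in>windows N. window_term N \<eta> x J \<le> t" and i: "i \<in> {1..N + 1}"
  shows "clockRate N TL TR K x i * jump_excess N TL TR \<eta> x i \<le> excess_bound N TL TR K \<eta> t"
proof -
  let ?R = "clockRate N TL TR K x i"
  have R: "0 \<le> ?R" "?R \<le> K"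
    using clockRate_nonneg[OF pos T K] clockRate_le_K i by auto
  have bath: "0 \<le> bath_excess N \<eta> TL" "0 \<le> bath_excess N \<eta> TR"
    using T \<eta> by (auto intro: bath_excess_nonneg)
  have gap: "0 \<le> 4 / \<eta> * (N * N) * t powr (alphaE \<eta> - alpha_gap N \<eta>)"
    using \<eta> by simp
  show ?thesis
  proof (cases "i = 1 \<or> i = N + 1")
    case True
    then have "?R * jump_excess N TL TR \<eta> x i \<le> K * (bath_excess N \<eta> TL + bath_excess N \<eta> TR)"
      using R bath by (intro mult_mono) (auto simp: jump_excess_def)
    then show ?thesis
      using gap by (simp add: excess_bound_def)
  next
    case False
    then have i': "2 \<le> i" "i \<le> N"
      using i by auto
    have "?R * jump_excess N TL TR \<eta> x i = 4 / \<eta> * (?R * crossing_sum N \<eta> x i)"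
      using False by (simp add: jump_excess_def)
    also have "\<dots> \<le> 4 / \<eta> * (N * N * t powr (alphaE \<eta> - alpha_gap N \<eta>))"
      using clockRate_mult_crossing_sum_le[OF pos i' K \<eta> t] \<eta> by (intro mult_left_mono) auto
    finally show ?thesis
      using K bath by (simp add: excess_bound_def mult.assoc add_increasing)
  qed
qed

lemma expVafter_add_le:
  fixes N :: nat and TL TR K :: real and x Y :: "nat \<Rightarrow> real"
  defines "R \<equiv> clockRate N TL TR K x" and "Rt \<equiv> totRate N TL TR K x"
  assumes R: "\<forall>i\<in>{1..N + 1}. 0 \<le> R i" and Rt: "0 < Rt"
    and jump: "\<forall>i\<in>{1..N + 1}. jumpExp N TL TR \<eta> i x \<le> ennreal (Y i)" and Y: "\<forall>i\<in>{1..N + 1}. 0 \<le> Y i"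
    and C: "0 \<le> C" "(\<Sum>i = 1..N + 1. R i * Y i) + C \<le> V * Rt"
  shows "expVafter N TL TR K \<eta> x + ennreal (C / Rt) \<le> ennreal V"
proof -
  have "expVafter N TL TR K \<eta> x \<le> (\<Sum>i = 1..N + 1. ennreal (R i / Rt) * ennreal (Y i))"
    unfolding expVafter_def R_def Rt_def totRate_def[symmetric]
    using jump by (intro sum_mono mult_left_mono) auto
  also have "\<dots> = (\<Sum>i = 1..N + 1. ennreal (R i / Rt * Y i))"
    using R Rt Y by (intro sum.cong refl ennreal_mult[symmetric]) auto
  also have "\<dots> = ennreal (\<Sum>i = 1..N + 1. R i / Rt * Y i)"
    using R Rt Y by (intro sum_ennreal) auto
  finally have "expVafter N TL TR K \<eta> x + ennreal (C / Rt)
      \<le> ennreal (\<Sum>i = 1..N + 1. R i / Rt * Y i) + ennreal (C / Rt)"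
    by (rule add_right_mono)
  also have "\<dots> = ennreal ((\<Sum>i = 1..N + 1. R i / Rt * Y i) + C / Rt)"
    using R Rt Y C by (intro ennreal_plus[symmetric] sum_nonneg) auto
  also have "(\<Sum>i = 1..N + 1. R i / Rt * Y i) + C / Rt = ((\<Sum>i = 1..N + 1. R i * Y i) + C) / Rt"
    by (simp add: sum_divide_distrib add_divide_distrib)
  also have "\<dots> \<le> V"
    using C Rt by (simp add: pos_divide_le_eq)
  finally show ?thesis
    by (simp add: ennreal_leI)
qed

lemma sum_mult_remove_term:
  fixes R B :: "'a \<Rightarrow> real"
  assumes "finite A" "c \<in> A"
  shows "(\<Sum>i\<in>A. R i * (V - (if i = c then t else 0) + B i)) = V * sum R A - R c * t + (\<Sum>i\<in>A. R i * B i)"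
proof -
  have "(\<Sum>i\<in>A. R i * (V - (if i = c then t else 0) + B i))
      = (\<Sum>i\<in>A. V * R i - (if i = c then R c * t else 0) + R i * B i)"
    by (intro sum.cong) (auto simp: algebra_simps)
  also have "\<dots> = V * sum R A - R c * t + (\<Sum>i\<in>A. R i * B i)"
    using assms by (simp add: sum.distrib sum_subtractf sum_distrib_left)
  finally show ?thesis .
qed

lemma expVafter_loss_gain_le:
  fixes N :: nat and TL TR K :: real and x B :: "nat \<Rightarrow> real"
  defines "R \<equiv> clockRate N TL TR K x" and "Rt \<equiv> totRate N TL TR K x"
  assumes R: "\<forall>i\<in>{1..N + 1}. 0 \<le> R i" and Rt: "0 < Rt" and c: "c \<in> {1..N + 1}"
    and jump: "\<forall>i\<in>{1..N + 1}. jumpExp N TL TR \<eta> i x \<le> ennreal (V - (if i = c then t else 0) + B i)"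
    and nonneg: "\<forall>i\<in>{1..N + 1}. 0 \<le> V - (if i = c then t else 0) + B i"
    and gain: "0 \<le> C" "(\<Sum>i = 1..N + 1. R i * B i) + C \<le> R c * t"
  shows "expVafter N TL TR K \<eta> x + ennreal (C / Rt) \<le> ennreal V"
proof -
  have "(\<Sum>i = 1..N + 1. R i * (V - (if i = c then t else 0) + B i)) = V * Rt - R c * t + (\<Sum>i = 1..N + 1. R i * B i)"
    unfolding Rt_def totRate_def R_def[symmetric] using c by (intro sum_mult_remove_term) auto
  then show ?thesis
    using expVafter_add_le[of N TL TR K x \<eta> "\<lambda>i. V - (if i = c then t else 0) + B i" C V] R Rt jump nonneg gain
    by (simp add: R_def Rt_def)
qed

lemma totRate_pos:
  assumes "\<forall>j\<in>{1..N + 1}. 0 \<le> clockRate N TL TR K x j" "i \<in> {1..N + 1}" "0 < clockRate N TL TR K x i"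
  shows "0 < totRate N TL TR K x"
proof -
  have "clockRate N TL TR K x i \<le> totRate N TL TR K x"
    unfolding totRate_def using assms(1,2) by (intro member_le_sum) auto
  then show ?thesis
    using assms(3) by linarith
qed

lemma Vfun_le_mult_max_window_term:
  assumes "\<forall>J\<in>windows N. window_term N \<eta> x J \<le> t" "0 \<le> t"
  shows "Vfun N \<eta> x \<le> N * N * t"
proof -
  have "(\<Sum>J\<in>windows N. window_term N \<eta> x J) \<le> real (N * N) * t"
    by (rule sum_windows_bounded_above) (use assms in auto)
  then show ?thesis
    by (simp add: Vfun_eq_sum_window_term)
qed

lemma powr_le_mult_powr:
  fixes v n t \<alpha> :: real
  assumes "0 \<le> v" "v \<le> n * t" "1 \<le> n" "0 \<le> t" "0 < \<alpha>" "\<alpha> \<le> 1"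
  shows "v powr \<alpha> \<le> n * t powr \<alpha>"
proof -
  have "v powr \<alpha> \<le> (n * t) powr \<alpha>"
    using assms by (intro powr_mono2) auto
  also have "\<dots> = n powr \<alpha> * t powr \<alpha>"
    using assms by (simp add: powr_mult)
  also have "n powr \<alpha> \<le> n powr 1"
    using assms by (intro powr_mono) auto
  finally show ?thesis
    using assms by (simp add: mult_right_mono)
qed

lemma Vfun_powr_le_mult_max_window_term:
  assumes "1 \<le> N" "\<forall>J\<in>windows N. window_term N \<eta> x J \<le> t" "0 \<le> t" "0 < \<alpha>" "\<alpha> \<le> 1"
  shows "Vfun N \<eta> x powr \<alpha> \<le> N * N * t powr \<alpha>"
proof -
  have "1 \<le> real N * real N"
    using assms(1) mult_mono[of 1 "real N" 1 "real N"] by simp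
  then show ?thesis
    using Vfun_le_mult_max_window_term[OF assms(2,3)] assms(3-5) Vfun_nonneg
    by (intro powr_le_mult_powr) auto
qed

lemma eventually_affine_powr_le_half:
  fixes A B \<alpha> \<gamma> :: real
  assumes "0 < \<gamma>" "0 < \<alpha>"
  shows "\<forall>\<^sub>F t in at_top. A + B * t powr (\<alpha> - \<gamma>) \<le> t powr \<alpha> / 2"
proof -
  have "((\<lambda>t. A * t powr -\<alpha> + B * t powr -\<gamma>) \<longlongrightarrow> A * 0 + B * 0) at_top"
    using assms by (intro tendsto_intros tendsto_neg_powr filterlim_ident) auto
  then have "\<forall>\<^sub>F t in at_top. A * t powr -\<alpha> + B * t powr -\<gamma> < 1/2"
    by (rule order_tendstoD) simp
  with eventually_gt_at_top[of 0] show ?thesis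
  proof eventually_elim
    case (elim t)
    then have "A + B * t powr (\<alpha> - \<gamma>) = t powr \<alpha> * (A * t powr -\<alpha> + B * t powr -\<gamma>)"
      by (simp add: algebra_simps powr_minus powr_diff divide_simps)
    also have "\<dots> \<le> t powr \<alpha> * (1/2)"
      using elim by (intro mult_left_mono) auto
    finally show ?case
      by simp
  qed
qed

lemma eventually_excess_bound_le:
  fixes N :: nat
  assumes "1 \<le> N" "0 < \<eta>" "\<eta> < eta_max N"
  shows "\<forall>\<^sub>F t in at_top. real (N + 1) * excess_bound N TL TR K \<eta> t \<le> t powr alphaE \<eta> / 2"
proof -
  have "0 < alpha_gap N \<eta>" "0 < alphaE \<eta>"
    using assms eta_max_le[of N] alphaE_bounds[of \<eta>] by (auto simp: alpha_gap_def)
  then show ?thesis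
    using eventually_affine_powr_le_half[of "alpha_gap N \<eta>" "alphaE \<eta>"
        "(N + 1) * (K * (bath_excess N \<eta> TL + bath_excess N \<eta> TR))" "(N + 1) * (4 / \<eta> * (N * N))"]
    by (simp add: excess_bound_def algebra_simps)
qed

lemma drift_at_max_window:
  fixes N :: nat and \<eta> TL TR K :: real and x :: "nat \<Rightarrow> real" and I :: "nat \<times> nat"
  defines "t \<equiv> window_term N \<eta> x I" and "\<alpha> \<equiv> alphaE \<eta>"
  assumes N: "1 \<le> N" and pos: "\<forall>j\<in>{1..N}. 0 < x j" and T: "0 < TL" "0 < TR" and K: "1 \<le> K"
    and \<eta>: "0 < \<eta>" "\<eta> < eta_max N"
    and I: "I \<in> windows N" "\<forall>J\<in>windows N. window_term N \<eta> x J \<le> t"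
    and large: "1 \<le> t" "1 / TL \<le> t" "1 / TR \<le> t" "real (N + 1) * excess_bound N TL TR K \<eta> t \<le> t powr \<alpha> / 2"
  shows "expVafter N TL TR K \<eta> x + ennreal (1 / (2 * N * N) / totRate N TL TR K x * Vfun N \<eta> x powr \<alpha>)
    \<le> ennreal (Vfun N \<eta> x)"
proof -
  define R where "R = clockRate N TL TR K x"
  have \<eta>1: "\<eta> < 1/8"
    using \<eta> eta_max_le[OF N] by simp
  have \<alpha>: "0 < \<alpha>" "\<alpha> \<le> 1"
    using alphaE_bounds[of \<eta>] \<eta>(1) \<eta>1 by (auto simp: \<alpha>_def)
  have c: "snd I \<in> {1..N + 1}"
    using I(1) by (cases I) auto
  have R: "\<forall>i\<in>{1..N + 1}. 0 \<le> R i"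
    using clockRate_nonneg[OF pos T] K by (auto simp: R_def)
  note Rc = clockRate_lower_bound[OF pos T K \<eta>(1) _ large(1-3) I(2), of "snd I"]
  have "(\<Sum>i = 1..N + 1. R i * jump_excess N TL TR \<eta> x i) \<le> card {1..N + 1} * excess_bound N TL TR K \<eta> t"
    using clockRate_mult_jump_excess_le[OF pos T _ \<eta> large(1) I(2)] K
    by (intro sum_bounded_above) (simp add: R_def)
  moreover have "Vfun N \<eta> x powr \<alpha> \<le> N * N * t powr \<alpha>"
    using Vfun_powr_le_mult_max_window_term[OF N I(2) _ \<alpha>] large(1) by simp
  then have "1 / (2 * N * N) * Vfun N \<eta> x powr \<alpha> \<le> t powr \<alpha> / 2"
    using N by (simp add: field_simps)
  ultimately have "(\<Sum>i = 1..N + 1. R i * jump_excess N TL TR \<eta> x i) + 1 / (2 * N * N) * Vfun N \<eta> x powr \<alpha>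
      \<le> R (snd I) * t"
    using large(4) Rc(2) \<eta>1 c by (simp add: R_def \<alpha>_def)
  then have "expVafter N TL TR K \<eta> x + ennreal (1 / (2 * N * N) * Vfun N \<eta> x powr \<alpha> / totRate N TL TR K x)
      \<le> ennreal (Vfun N \<eta> x)"
    using R c Rc(1) \<eta>1 jumpExp_le[OF pos T \<eta>(1) _ I(1)] window_term_le_Vfun[OF I(1)]
      jump_excess_nonneg[OF T \<eta>(1)] Vfun_nonneg totRate_pos[of N TL TR K x "snd I"]
    unfolding R_def t_def by (intro expVafter_loss_gain_le) (auto simp: add_nonneg_nonneg)
  then show ?thesis
    by simp
qed

lemma drift_eventually:
  fixes N :: nat and \<eta> TL TR K :: real
  assumes N: "1 \<le> N" and T: "0 < TL" "0 < TR" and K: "1 \<le> K" and \<eta>: "0 < \<eta>" "\<eta> < eta_max N"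
  shows "\<exists>C1 > 0. \<exists>M'. \<forall>E :: nat \<Rightarrow> real. (\<forall>i \<in> {1..N}. E i > 0) \<and> Vfun N \<eta> E > M' \<longrightarrow>
    expVafter N TL TR K \<eta> E + ennreal (C1 / totRate N TL TR K E * Vfun N \<eta> E powr alphaE \<eta>)
      \<le> ennreal (Vfun N \<eta> E)"
proof -
  have "\<forall>\<^sub>F t in at_top. 1 \<le> t \<and> 1 / TL \<le> t \<and> 1 / TR \<le> t
      \<and> real (N + 1) * excess_bound N TL TR K \<eta> t \<le> t powr alphaE \<eta> / 2"
    by (intro eventually_conj eventually_ge_at_top eventually_excess_bound_le N \<eta>)
  then obtain M0 where M0: "\<And>t. M0 \<le> t \<Longrightarrow> 1 \<le> t \<and> 1 / TL \<le> t \<and> 1 / TR \<le> t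
      \<and> real (N + 1) * excess_bound N TL TR K \<eta> t \<le> t powr alphaE \<eta> / 2"
    by (auto simp: eventually_at_top_linorder)
  show ?thesis
  proof (rule exI[of _ "1 / (2 * N * N)"], rule conjI)
    show "0 < 1 / (2 * N * N)"
      using N by simp
    show "\<exists>M'. \<forall>E :: nat \<Rightarrow> real. (\<forall>i \<in> {1..N}. E i > 0) \<and> Vfun N \<eta> E > M' \<longrightarrow>
      expVafter N TL TR K \<eta> E + ennreal (1 / (2 * N * N) / totRate N TL TR K E * Vfun N \<eta> E powr alphaE \<eta>)
        \<le> ennreal (Vfun N \<eta> E)"
    proof (rule exI[of _ "N * N * M0"], intro allI impI)
      fix E :: "nat \<Rightarrow> real"
      assume E: "(\<forall>i\<in>{1..N}. 0 < E i) \<and> N * N * M0 < Vfun N \<eta> E"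
      obtain I where I: "I \<in> windows N" "\<forall>J\<in>windows N. window_term N \<eta> E J \<le> window_term N \<eta> E I"
        using ex_max_window_term[OF N] by blast
      have "N * N * M0 < N * N * window_term N \<eta> E I"
        using E Vfun_le_mult_max_window_term[OF I(2) window_term_nonneg] by simp
      then have "M0 \<le> window_term N \<eta> E I"
        by (simp add: mult_less_cancel_left)
      then show "expVafter N TL TR K \<eta> E
          + ennreal (1 / (2 * N * N) / totRate N TL TR K E * Vfun N \<eta> E powr alphaE \<eta>) \<le> ennreal (Vfun N \<eta> E)"
        using drift_at_max_window[OF N _ T K \<eta> I] E M0 by blast
    qed
  qed
qed

theorem lemma4p6:
  fixes N :: nat and TL TR :: real
  assumes "N \<ge> 1" and "TL > 0" and "TR > 0"
  shows "\<exists>K0. \<forall>K \<ge> K0. \<exists>\<eta>0 > 0. \<forall>\<eta>. 0 < \<eta> \<and> \<eta> < \<eta>0 \<longrightarrow>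
           (\<exists>C1 > 0. \<exists>M'. \<forall>E :: nat \<Rightarrow> real.
              (\<forall>i \<in> {1..N}. E i > 0) \<and> Vfun N \<eta> E > M' \<longrightarrow>
                expVafter N TL TR K \<eta> E
                  + ennreal (C1 / totRate N TL TR K E * Vfun N \<eta> E powr alphaE \<eta>)
                \<le> ennreal (Vfun N \<eta> E))"
proof (rule exI[of _ 1], intro allI impI, rule exI[of _ "eta_max N"], intro conjI allI impI)
  show "0 < eta_max N"
    using assms(1) power_increasing[of 1 N "2::real"] by (simp add: eta_max_def)
qed (use drift_eventually[OF assms] in auto)

end
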